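(* Let $m>0$, $\gamma>0$, $c_k=k^{-(1+\alpha\beta)}$, $\lambda_k=k^{-\beta}$ ($k\geq1$), with $\alpha>1$, $\beta>\frac1{\alpha-1}$ and $\frac12<s<\frac{(\alpha-1)\beta}2$. Let $\Phi\in C^\infty(\mathbb{R})$ satisfy $\int_{\mathbb{R}}|\Phi'|e^{-\Phi}dx<\infty$ and $b(\Phi(x)+1)\geq x^2$ for some $b>0$ and all $x$. For $N\in\mathbb{N}$ define $\Theta(\cdot;s,N):\mathcal{H}_{-s}\to\mathbb{R}$ by $$\Theta(X;s,N)=\frac1m\Phi(x)+\frac12v^2+\frac1{2m}\sum_{k=1}^Nz_k^2+\frac12\sum_{k>N}k^{-2s}z_k^2.$$ Then there exists $N=N(m,\gamma,\alpha,\beta,s)\in\mathbb{N}$ sufficiently large such that, for some $a>0$, $\Theta(X):=\Theta(X;s,N)$ satisfies $$\sup_{X\in\mathcal{H}_{-s}}\mathcal{L}\Theta(X)\leq a.$$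
   Context: $\mathcal{H}_{-s}$ is the Hilbert space of real sequences $X=(x,v,z_1,z_2,\dots)$ with $\|X\|_{-s}^2=x^2+v^2+\sum_{k\geq1}k^{-2s}z_k^2<\infty$. For smooth $\varphi$, $\mathcal L\varphi(X)=v\partial_x\varphi+\big(-\tfrac\gamma mv-\tfrac1m\Phi'(x)-\tfrac1m\sum_{k\geq1}\sqrt{c_k}z_k\big)\partial_v\varphi+\sum_{k\geq1}(-\lambda_kz_k+\sqrt{c_k}v)\partial_{z_k}\varphi+\tfrac{\gamma}{m^2}\partial_v^2\varphi+\sum_{k\geq1}\lambda_k\partial_{z_k}^2\varphi$, the generator of the system $dx=v\,dt$, $m\,dv=(-\gamma v-\Phi'(x)-\sum_k\sqrt{c_k}z_k)dt+\sqrt{2\gamma}dW_0$, $dz_k=(-\lambda_kz_k+\sqrt{c_k}v)dt+\sqrt{2\lambda_k}dW_k$. *)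

theory Defs
  imports "HOL-Analysis.Analysis"
begin

text \<open>A point X = (x, v, z) of H_{-s}; the coordinates z_k (k \<ge> 1) are z k,
  the value z 0 is unused.\<close>
type_synonym state = "real \<times> real \<times> (nat \<Rightarrow> real)"

definition Hs :: "real \<Rightarrow> state set" where
  "Hs r = {X. summable (\<lambda>k. real (Suc k) powr (- (2*r)) * (snd (snd X) (Suc k))\<^sup>2)}"

definition gen :: "real \<Rightarrow> real \<Rightarrow> (real \<Rightarrow> real) \<Rightarrow> (nat \<Rightarrow> real) \<Rightarrow> (nat \<Rightarrow> real)
    \<Rightarrow> (state \<Rightarrow> real) \<Rightarrow> state \<Rightarrow> real" where
  "gen m \<gamma> \<Phi> c lam \<phi> X = (case X of (x, v, z) \<Rightarrow>
     v * deriv (\<lambda>t. \<phi> (t, v, z)) x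
   + (- \<gamma> / m * v - deriv \<Phi> x / m - (1/m) * (\<Sum>k. sqrt (c (Suc k)) * z (Suc k)))
       * deriv (\<lambda>t. \<phi> (x, t, z)) v
   + (\<Sum>k. (- lam (Suc k) * z (Suc k) + sqrt (c (Suc k)) * v)
            * deriv (\<lambda>t. \<phi> (x, v, z(Suc k := t))) (z (Suc k)))
   + \<gamma> / m\<^sup>2 * deriv (deriv (\<lambda>t. \<phi> (x, t, z))) v
   + (\<Sum>k. lam (Suc k) * deriv (deriv (\<lambda>t. \<phi> (x, v, z(Suc k := t)))) (z (Suc k))))"

definition Theta :: "real \<Rightarrow> (real \<Rightarrow> real) \<Rightarrow> real \<Rightarrow> nat \<Rightarrow> state \<Rightarrow> real" where
  "Theta m \<Phi> r N X = (case X of (x, v, z) \<Rightarrow>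
     \<Phi> x / m + v\<^sup>2 / 2 + (1 / (2*m)) * (\<Sum>k\<in>{1..N}. (z k)\<^sup>2)
     + (1/2) * (\<Sum>k. if Suc k > N then real (Suc k) powr (- (2*r)) * (z (Suc k))\<^sup>2 else 0))"

end

(* Write w_k for the coefficient of z_k^2/2 in Theta: 1/m for k <= N and k^(-2s) for k > N.
   Applying the generator, the Phi' terms cancel and what remains is
     -gamma/m v^2 + gamma/m^2 + sum_k lambda_k w_k
       + sum_k (-lambda_k w_k z_k^2 + v sqrt(c_k) (w_k - 1/m) z_k).
   For k <= N the cross term vanishes; for k > N completing the square in z_k bounds the summand
   by v^2 (1 + 1/m)^2/4 * c_k/(lambda_k w_k) = v^2 (1 + 1/m)^2/4 * k^(-1-delta),
   delta = (alpha - 1) beta - 2s > 0. Taking N so large that this tail is at most gamma/m,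
   the damping term -gamma/m v^2 absorbs it, uniformly in X. *)

theory Submission
  imports Defs
begin

definition Theta_weight :: "real \<Rightarrow> real \<Rightarrow> nat \<Rightarrow> nat \<Rightarrow> real" where
  "Theta_weight m r N n = (if n \<le> N then 1 / m else real n powr (- (2 * r)))"

lemma deriv_half_square: "deriv (\<lambda>t::real. A + w * t\<^sup>2 / 2) = (\<lambda>t. w * t)"
proof
  fix t :: real
  have "((\<lambda>t::real. A + w * t\<^sup>2 / 2) has_real_derivative w * t) (at t)"
    by (auto intro!: derivative_eq_intros simp: power2_eq_square)
  then show "deriv (\<lambda>t::real. A + w * t\<^sup>2 / 2) t = w * t" by (rule DERIV_imp_deriv)
qed

lemma sums_Theta_tail_upd:
  assumes "summable (\<lambda>j. real (Suc j) powr (- (2 * r)) * (z (Suc j))\<^sup>2)"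
  shows "(\<lambda>j. if N < Suc j then real (Suc j) powr (- (2 * r)) * ((z(Suc k := t)) (Suc j))\<^sup>2 else 0)
    sums ((if N < Suc k then real (Suc k) powr (- (2 * r)) * t\<^sup>2 else 0)
      + (\<Sum>j. if N < Suc j then real (Suc j) powr (- (2 * r)) * ((z(Suc k := 0)) (Suc j))\<^sup>2 else 0))"
proof -
  define f0 where "f0 = (\<lambda>j. if N < Suc j then real (Suc j) powr (- (2 * r)) * ((z(Suc k := 0)) (Suc j))\<^sup>2 else 0)"
  define e where "e = (\<lambda>j. if j = k then (if N < Suc k then real (Suc k) powr (- (2 * r)) * t\<^sup>2 else 0) else 0)"
  have "summable f0"
    by (rule summable_comparison_test'[OF assms, of 0]) (auto simp: f0_def)
  moreover have "e sums (if N < Suc k then real (Suc k) powr (- (2 * r)) * t\<^sup>2 else 0)"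
    unfolding e_def by (rule sums_single)
  ultimately have "(\<lambda>j. e j + f0 j) sums ((if N < Suc k then real (Suc k) powr (- (2 * r)) * t\<^sup>2 else 0) + suminf f0)"
    by (intro sums_add) (auto simp: summable_sums)
  moreover have "(\<lambda>j. if N < Suc j then real (Suc j) powr (- (2 * r)) * ((z(Suc k := t)) (Suc j))\<^sup>2 else 0)
      = (\<lambda>j. e j + f0 j)"
    by (auto simp: e_def f0_def)
  ultimately show ?thesis by (simp add: f0_def)
qed

lemma Theta_fun_upd:
  assumes "summable (\<lambda>j. real (Suc j) powr (- (2 * r)) * (z (Suc j))\<^sup>2)"
  shows "Theta m \<Phi> r N (x, v, z(Suc k := t))
    = Theta m \<Phi> r N (x, v, z(Suc k := 0)) + Theta_weight m r N (Suc k) * t\<^sup>2 / 2"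
proof -
  have "(\<Sum>j\<in>{1..N}. ((z(Suc k := t)) j)\<^sup>2)
      = (\<Sum>j\<in>{1..N}. (if j = Suc k then t\<^sup>2 else 0) + ((z(Suc k := 0)) j)\<^sup>2)"
    by (rule sum.cong) auto
  then have "(\<Sum>j\<in>{1..N}. ((z(Suc k := t)) j)\<^sup>2)
      = (\<Sum>j\<in>{1..N}. ((z(Suc k := 0)) j)\<^sup>2) + (if Suc k \<le> N then t\<^sup>2 else 0)"
    by (simp add: sum.distrib)
  with sums_unique[OF sums_Theta_tail_upd[OF assms, of N k t]] show ?thesis
    by (auto simp: Theta_def Theta_weight_def add_divide_distrib)
qed

lemma deriv_Theta_position:
  assumes "\<Phi> differentiable (at x)"
  shows "deriv (\<lambda>t. Theta m \<Phi> r N (t, v, z)) x = deriv \<Phi> x / m"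
proof (rule DERIV_imp_deriv)
  have "(\<Phi> has_real_derivative deriv \<Phi> x) (at x)"
    using assms by (simp add: DERIV_deriv_iff_real_differentiable)
  then have "((\<lambda>t. \<Phi> t / m + (Theta m \<Phi> r N (x, v, z) - \<Phi> x / m))
      has_real_derivative deriv \<Phi> x / m + 0) (at x)"
    by (intro DERIV_add DERIV_cdivide DERIV_const)
  moreover have "(\<lambda>t. Theta m \<Phi> r N (t, v, z)) = (\<lambda>t. \<Phi> t / m + (Theta m \<Phi> r N (x, v, z) - \<Phi> x / m))"
    by (auto simp: Theta_def)
  ultimately show "((\<lambda>t. Theta m \<Phi> r N (t, v, z)) has_real_derivative deriv \<Phi> x / m) (at x)"
    by simp
qed

lemma deriv_Theta_velocity: "deriv (\<lambda>t. Theta m \<Phi> r N (x, t, z)) = (\<lambda>t. t)"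
proof -
  have "(\<lambda>t. Theta m \<Phi> r N (x, t, z)) = (\<lambda>t. Theta m \<Phi> r N (x, 0, z) + 1 * t\<^sup>2 / 2)"
    by (auto simp: Theta_def)
  then show ?thesis using deriv_half_square[of "Theta m \<Phi> r N (x, 0, z)" 1] by simp
qed

lemma deriv_Theta_mode:
  assumes "(x, v, z) \<in> Hs r"
  shows "deriv (\<lambda>t. Theta m \<Phi> r N (x, v, z(Suc k := t))) = (\<lambda>t. Theta_weight m r N (Suc k) * t)"
proof -
  have "summable (\<lambda>j. real (Suc j) powr (- (2 * r)) * (z (Suc j))\<^sup>2)"
    using assms by (simp add: Hs_def)
  then have "(\<lambda>t. Theta m \<Phi> r N (x, v, z(Suc k := t)))
      = (\<lambda>t. Theta m \<Phi> r N (x, v, z(Suc k := 0)) + Theta_weight m r N (Suc k) * t\<^sup>2 / 2)"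
    by (intro ext Theta_fun_upd)
  then show ?thesis by (simp only: deriv_half_square)
qed

lemma gen_Theta:
  assumes "\<Phi> differentiable (at x)" "(x, v, z) \<in> Hs r"
  shows "gen m \<gamma> \<Phi> c lam (Theta m \<Phi> r N) (x, v, z)
    = - \<gamma> / m * v\<^sup>2 - v / m * (\<Sum>k. sqrt (c (Suc k)) * z (Suc k))
      + (\<Sum>k. (- lam (Suc k) * z (Suc k) + sqrt (c (Suc k)) * v) * (Theta_weight m r N (Suc k) * z (Suc k)))
      + \<gamma> / m\<^sup>2 + (\<Sum>k. lam (Suc k) * Theta_weight m r N (Suc k))"
  unfolding gen_def prod.case deriv_Theta_position[OF assms(1)] deriv_Theta_velocity
    deriv_Theta_mode[OF assms(2)] deriv_ident deriv_linear
  by (simp add: algebra_simps power2_eq_square)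

lemma summable_Suc_powr: "p < -1 \<Longrightarrow> summable (\<lambda>k. real (Suc k) powr p)"
  using summable_Suc_iff[of "\<lambda>n. real n powr p"] summable_real_powr_iff by simp

lemma abs_mult_le_half_sum_squares:
  fixes x y :: real
  shows "\<bar>x * y\<bar> \<le> (x\<^sup>2 + y\<^sup>2) / 2"
  using sum_squares_bound[of "\<bar>x\<bar>" "\<bar>y\<bar>"] by (simp add: abs_mult)

lemma abs_sqrt_powr_mult_le:
  fixes n p r y :: real
  assumes "0 < n"
  shows "\<bar>sqrt (n powr p) * y\<bar> \<le> (n powr (p + 2 * r) + n powr (- (2 * r)) * y\<^sup>2) / 2"
proof -
  have split: "sqrt (n powr p) * y = (sqrt (n powr p) * n powr r) * (n powr (- r) * y)"
    using assms by (simp add: powr_minus field_simps)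
  have left: "(sqrt (n powr p) * n powr r)\<^sup>2 = n powr (p + 2 * r)"
    by (simp add: power2_eq_square powr_add[symmetric] ac_simps)
  have right: "(n powr (- r) * y)\<^sup>2 = n powr (- (2 * r)) * y\<^sup>2"
    by (simp add: power2_eq_square powr_add[symmetric] mult_ac)
  show ?thesis
    using abs_mult_le_half_sum_squares[of "sqrt (n powr p) * n powr r" "n powr (- r) * y"]
    unfolding split left right .
qed

lemma summable_abs_sqrt_powr_mult:
  assumes "summable (\<lambda>k. real (Suc k) powr (- (2 * r)) * (z (Suc k))\<^sup>2)" "p + 2 * r < -1"
  shows "summable (\<lambda>k. \<bar>sqrt (real (Suc k) powr p) * z (Suc k)\<bar>)"
proof (rule summable_comparison_test')
  show "summable (\<lambda>k. (real (Suc k) powr (p + 2 * r) + real (Suc k) powr (- (2 * r)) * (z (Suc k))\<^sup>2) / 2)"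
    using assms by (intro summable_divide summable_add summable_Suc_powr)
  show "norm \<bar>sqrt (real (Suc k) powr p) * z (Suc k)\<bar>
      \<le> (real (Suc k) powr (p + 2 * r) + real (Suc k) powr (- (2 * r)) * (z (Suc k))\<^sup>2) / 2" for k
    using abs_sqrt_powr_mult_le[of "real (Suc k)"] by simp
qed

lemma neg_quadratic_le:
  fixes \<mu> B y :: real
  assumes "0 < \<mu>"
  shows "- \<mu> * y\<^sup>2 + B * y \<le> B\<^sup>2 / (4 * \<mu>)"
proof -
  have "0 \<le> (2 * \<mu> * y - B)\<^sup>2" by simp
  then have "4 * \<mu> * (B * y - \<mu> * y\<^sup>2) \<le> B\<^sup>2" by (simp add: power2_eq_square algebra_simps)
  with assms show ?thesis by (simp add: field_simps)
qed

lemma abs_diff_inverse_le: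
  fixes m w :: real
  assumes "0 < m" "0 < w" "w \<le> 1"
  shows "\<bar>w - 1 / m\<bar> \<le> 1 + 1 / m"
proof -
  have "0 < 1 / m" using assms(1) by simp
  with assms show ?thesis unfolding abs_le_iff by linarith
qed

lemma drift_term_le:
  fixes m lam w c v y :: real
  assumes "0 < m" "0 < lam" "0 < w" "w \<le> 1" "0 \<le> c"
  shows "- lam * w * y\<^sup>2 + v * sqrt c * (w - 1 / m) * y \<le> v\<^sup>2 * ((1 + 1 / m)\<^sup>2 / 4) * (c / (lam * w))"
proof -
  have "- lam * w * y\<^sup>2 + v * sqrt c * (w - 1 / m) * y \<le> (v * sqrt c * (w - 1 / m))\<^sup>2 / (4 * (lam * w))"
    using neg_quadratic_le[of "lam * w"] assms by simp
  also have "\<dots> = v\<^sup>2 * ((w - 1 / m)\<^sup>2 / 4) * (c / (lam * w))"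
    using assms by (simp add: power_mult_distrib)
  also have "\<dots> \<le> v\<^sup>2 * ((1 + 1 / m)\<^sup>2 / 4) * (c / (lam * w))"
  proof -
    have "(w - 1 / m)\<^sup>2 \<le> (1 + 1 / m)\<^sup>2"
      using abs_diff_inverse_le[OF assms(1,3,4)] assms(1) by (simp add: power2_le_iff_abs_le add_pos_pos)
    with assms show ?thesis by (intro mult_right_mono mult_left_mono divide_right_mono) auto
  qed
  finally show ?thesis .
qed

lemma Theta_weight_tail:
  assumes "N < n" "0 \<le> r"
  shows "Theta_weight m r N n = real n powr (- (2 * r))" "0 < Theta_weight m r N n"
    "Theta_weight m r N n \<le> 1"
  using assms powr_mono[of "- (2 * r)" 0 "real n"] by (auto simp: Theta_weight_def)

lemma drift_term_powr_le:
  fixes m \<alpha> \<beta> s v y :: real and k N :: nat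
  assumes "0 < m" "0 \<le> s"
  defines "n \<equiv> real (Suc k)" and "w \<equiv> Theta_weight m s N (Suc k)"
  shows "(- (n powr (- \<beta>)) * y + sqrt (n powr (- (1 + \<alpha> * \<beta>))) * v) * (w * y)
      - v / m * (sqrt (n powr (- (1 + \<alpha> * \<beta>))) * y)
    \<le> v\<^sup>2 * ((1 + 1 / m)\<^sup>2 / 4) * (if N \<le> k then n powr (\<beta> + 2 * s - 1 - \<alpha> * \<beta>) else 0)"
proof (cases "N \<le> k")
  case True
  then have w: "w = n powr (- (2 * s))" "0 < w" "w \<le> 1"
    using Theta_weight_tail[of N "Suc k" s m] assms by auto
  have "(- (n powr (- \<beta>)) * y + sqrt (n powr (- (1 + \<alpha> * \<beta>))) * v) * (w * y)
      - v / m * (sqrt (n powr (- (1 + \<alpha> * \<beta>))) * y)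
    = - (n powr (- \<beta>)) * w * y\<^sup>2 + v * sqrt (n powr (- (1 + \<alpha> * \<beta>))) * (w - 1 / m) * y"
    by (simp add: algebra_simps power2_eq_square)
  also have "\<dots> \<le> v\<^sup>2 * ((1 + 1 / m)\<^sup>2 / 4) * (n powr (- (1 + \<alpha> * \<beta>)) / (n powr (- \<beta>) * w))"
    using w by (intro drift_term_le assms(1)) (auto simp: n_def)
  also have "n powr (- (1 + \<alpha> * \<beta>)) / (n powr (- \<beta>) * w) = n powr (\<beta> + 2 * s - 1 - \<alpha> * \<beta>)"
    unfolding w(1) by (simp add: n_def powr_add[symmetric] powr_diff[symmetric] algebra_simps)
  finally show ?thesis using True by simp
next
  case False
  then have "w = 1 / m" by (simp add: w_def Theta_weight_def)
  then have "(- (n powr (- \<beta>)) * y + sqrt (n powr (- (1 + \<alpha> * \<beta>))) * v) * (w * y)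
      - v / m * (sqrt (n powr (- (1 + \<alpha> * \<beta>))) * y) = - (n powr (- \<beta>) * y\<^sup>2 / m)"
    by (simp add: algebra_simps power2_eq_square)
  then show ?thesis
    using False assms(1) by simp
qed

lemma sums_tail_if:
  fixes f :: "nat \<Rightarrow> real"
  assumes "summable f"
  shows "(\<lambda>k. if N \<le> k then f k else 0) sums (\<Sum>i. f (i + N))"
proof -
  have "(\<lambda>i. f (i + N)) sums (\<Sum>i. f (i + N))"
    using summable_ignore_initial_segment[OF assms] by (rule summable_sums)
  then show ?thesis
    using sums_zero_iff_shift[of N "\<lambda>k. if N \<le> k then f k else 0"] by simp
qed

lemma drift_series_le:
  fixes m \<alpha> \<beta> s v :: real and N :: nat
  assumes "0 < m" "0 < \<beta>" "0 \<le> s" "2 * s < (\<alpha> - 1) * \<beta>" "(x, v, z) \<in> Hs s"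
  defines "c \<equiv> \<lambda>n. sqrt (real n powr (- (1 + \<alpha> * \<beta>)))" and "w \<equiv> Theta_weight m s N"
  shows "(\<Sum>k. (- (real (Suc k) powr (- \<beta>)) * z (Suc k) + c (Suc k) * v) * (w (Suc k) * z (Suc k)))
      - v / m * (\<Sum>k. c (Suc k) * z (Suc k))
    \<le> v\<^sup>2 * ((1 + 1 / m)\<^sup>2 / 4) * (\<Sum>i. real (Suc (i + N)) powr (\<beta> + 2 * s - 1 - \<alpha> * \<beta>))"
proof -
  define T where "T k = (- (real (Suc k) powr (- \<beta>)) * z (Suc k) + c (Suc k) * v) * (w (Suc k) * z (Suc k))
      - v / m * (c (Suc k) * z (Suc k))" for k
  define h where "h k = real (Suc k) powr (\<beta> + 2 * s - 1 - \<alpha> * \<beta>)" for k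
  have sm: "summable (\<lambda>k. real (Suc k) powr (- (2 * s)) * (z (Suc k))\<^sup>2)"
    using assms(5) by (simp add: Hs_def)
  have "2 * s < \<alpha> * \<beta>" using assms(2,4) by (simp add: algebra_simps)
  then have abs_c: "summable (\<lambda>k. \<bar>c (Suc k) * z (Suc k)\<bar>)"
    unfolding c_def by (intro summable_abs_sqrt_powr_mult[OF sm]) simp
  have "summable T"
  proof (rule summable_comparison_test'[of _ N])
    show "summable (\<lambda>k. real (Suc k) powr (- (2 * s)) * (z (Suc k))\<^sup>2 + \<bar>v\<bar> * (1 + 1 / m) * \<bar>c (Suc k) * z (Suc k)\<bar>)"
      using sm abs_c by (intro summable_add summable_mult)
    fix k assume "N \<le> k"
    then have w: "w (Suc k) = real (Suc k) powr (- (2 * s))" "0 < w (Suc k)" "w (Suc k) \<le> 1"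
      using Theta_weight_tail[of N "Suc k" s m] assms(3) by (auto simp: w_def)
    have "real (Suc k) powr (- \<beta>) \<le> 1"
      using assms(2) powr_mono[of "- \<beta>" 0 "real (Suc k)"] by simp
    then have "\<bar>real (Suc k) powr (- \<beta>) * w (Suc k) * (z (Suc k))\<^sup>2\<bar> \<le> real (Suc k) powr (- (2 * s)) * (z (Suc k))\<^sup>2"
      using w by (simp add: abs_mult mult_left_le_one_le)
    moreover have "\<bar>v * (w (Suc k) - 1 / m) * (c (Suc k) * z (Suc k))\<bar> \<le> \<bar>v\<bar> * (1 + 1 / m) * \<bar>c (Suc k) * z (Suc k)\<bar>"
      using abs_diff_inverse_le[OF assms(1) w(2,3)] by (simp add: abs_mult mult_left_mono mult_right_mono)
    moreover have "T k = - (real (Suc k) powr (- \<beta>) * w (Suc k) * (z (Suc k))\<^sup>2)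
        + v * (w (Suc k) - 1 / m) * (c (Suc k) * z (Suc k))"
      by (simp add: T_def algebra_simps power2_eq_square)
    ultimately show "norm (T k) \<le> real (Suc k) powr (- (2 * s)) * (z (Suc k))\<^sup>2 + \<bar>v\<bar> * (1 + 1 / m) * \<bar>c (Suc k) * z (Suc k)\<bar>"
      unfolding real_norm_def by linarith
  qed
  have "summable h"
    unfolding h_def using assms(4) by (intro summable_Suc_powr) (simp add: algebra_simps)
  have summable_c: "summable (\<lambda>k. c (Suc k) * z (Suc k))"
    using abs_c by (rule summable_rabs_cancel)
  have "(\<Sum>k. T k + v / m * (c (Suc k) * z (Suc k))) = suminf T + v / m * (\<Sum>k. c (Suc k) * z (Suc k))"
    using suminf_add[OF \<open>summable T\<close> summable_mult[OF summable_c, of "v / m"]]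
      suminf_mult[OF summable_c, of "v / m"]
    by simp
  then have "(\<Sum>k. (- (real (Suc k) powr (- \<beta>)) * z (Suc k) + c (Suc k) * v) * (w (Suc k) * z (Suc k)))
      - v / m * (\<Sum>k. c (Suc k) * z (Suc k)) = suminf T"
    by (simp add: T_def)
  also have "\<dots> \<le> (\<Sum>k. v\<^sup>2 * ((1 + 1 / m)\<^sup>2 / 4) * (if N \<le> k then h k else 0))"
  proof (rule suminf_le[OF _ \<open>summable T\<close>])
    show "T k \<le> v\<^sup>2 * ((1 + 1 / m)\<^sup>2 / 4) * (if N \<le> k then h k else 0)" for k
      using drift_term_powr_le[OF assms(1,3), where y = "z (Suc k)" and k = k and N = N]
      unfolding T_def c_def w_def h_def .
    show "summable (\<lambda>k. v\<^sup>2 * ((1 + 1 / m)\<^sup>2 / 4) * (if N \<le> k then h k else 0))"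
      using \<open>summable h\<close> by (intro summable_mult sums_summable[OF sums_tail_if])
  qed
  also have "\<dots> = v\<^sup>2 * ((1 + 1 / m)\<^sup>2 / 4) * (\<Sum>i. h (i + N))"
    using sums_mult[OF sums_tail_if[OF \<open>summable h\<close>]] by (rule sums_unique[symmetric])
  finally show ?thesis by (simp add: h_def)
qed

lemma exists_scaled_tail_le:
  fixes f :: "nat \<Rightarrow> real"
  assumes "summable f" "0 < \<epsilon>"
  shows "\<exists>N. K * (\<Sum>i. f (i + N)) \<le> \<epsilon>"
proof -
  obtain N where "norm (\<Sum>i. K * f (i + N)) < \<epsilon>"
    using suminf_exist_split[OF assms(2) summable_mult[OF assms(1), of K]] by auto
  moreover have "(\<Sum>i. K * f (i + N)) = K * (\<Sum>i. f (i + N))"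
    using summable_ignore_initial_segment[OF assms(1)] by (rule suminf_mult)
  ultimately have "K * (\<Sum>i. f (i + N)) < \<epsilon>" by (simp add: abs_less_iff)
  then show ?thesis by (blast intro: less_imp_le)
qed

lemma gen_Theta_le:
  fixes m \<gamma> \<alpha> \<beta> s v :: real and N :: nat
  assumes "0 < m" "0 < \<beta>" "0 \<le> s" "2 * s < (\<alpha> - 1) * \<beta>"
    and "\<Phi> differentiable (at x)" "(x, v, z) \<in> Hs s"
  shows "gen m \<gamma> \<Phi> (\<lambda>k. real k powr (- (1 + \<alpha> * \<beta>))) (\<lambda>k. real k powr (- \<beta>)) (Theta m \<Phi> s N) (x, v, z)
    \<le> - \<gamma> / m * v\<^sup>2
      + v\<^sup>2 * ((1 + 1 / m)\<^sup>2 / 4) * (\<Sum>i. real (Suc (i + N)) powr (\<beta> + 2 * s - 1 - \<alpha> * \<beta>))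
      + \<gamma> / m\<^sup>2 + (\<Sum>k. real (Suc k) powr (- \<beta>) * Theta_weight m s N (Suc k))"
  using gen_Theta[OF assms(5,6), of m \<gamma> "\<lambda>k. real k powr (- (1 + \<alpha> * \<beta>))" "\<lambda>k. real k powr (- \<beta>)" N]
    drift_series_le[OF assms(1-4,6), of N]
  by linarith

theorem proposition5p3:
  fixes m \<gamma> \<alpha> \<beta> s b :: real and \<Phi> :: "real \<Rightarrow> real"
  assumes "m > 0" "\<gamma> > 0" "\<alpha> > 1" "\<beta> > 1 / (\<alpha> - 1)"
    and "1/2 < s" "s < (\<alpha> - 1) * \<beta> / 2"
    and "\<forall>n x. ((deriv ^^ n) \<Phi>) differentiable (at x)"
    and "integrable lborel (\<lambda>x. \<bar>deriv \<Phi> x\<bar> * exp (- \<Phi> x))"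
    and "b > 0" "\<forall>x. b * (\<Phi> x + 1) \<ge> x\<^sup>2"
  shows "\<exists>N::nat. \<exists>a>0. \<forall>X\<in>Hs s.
     gen m \<gamma> \<Phi> (\<lambda>k. real k powr (-(1 + \<alpha>*\<beta>))) (\<lambda>k. real k powr (-\<beta>))
         (Theta m \<Phi> s N) X \<le> a"
proof -
  have "0 < 1 / (\<alpha> - 1)" using assms(3) by simp
  with assms(4) have "0 < \<beta>" by linarith
  have "summable (\<lambda>k. real (Suc k) powr (\<beta> + 2 * s - 1 - \<alpha> * \<beta>))"
    using assms(6) by (intro summable_Suc_powr) (simp add: algebra_simps)
  moreover have "0 < \<gamma> / m" using assms(1,2) by simp
  ultimately obtain N where tail:
    "(1 + 1 / m)\<^sup>2 / 4 * (\<Sum>i. real (Suc (i + N)) powr (\<beta> + 2 * s - 1 - \<alpha> * \<beta>)) \<le> \<gamma> / m"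
    using exists_scaled_tail_le by blast
  define P where "P = (\<Sum>k. real (Suc k) powr (- \<beta>) * Theta_weight m s N (Suc k))"
  have "gen m \<gamma> \<Phi> (\<lambda>k. real k powr (-(1 + \<alpha>*\<beta>))) (\<lambda>k. real k powr (-\<beta>)) (Theta m \<Phi> s N) (x, v, z)
      \<le> \<gamma> / m\<^sup>2 + \<bar>P\<bar>" if "(x, v, z) \<in> Hs s" for x v z
  proof -
    have "\<Phi> differentiable (at x)" using assms(7) funpow_0 by metis
    moreover have "v\<^sup>2 * ((1 + 1 / m)\<^sup>2 / 4) * (\<Sum>i. real (Suc (i + N)) powr (\<beta> + 2 * s - 1 - \<alpha> * \<beta>))
        \<le> \<gamma> / m * v\<^sup>2"
      using mult_left_mono[OF tail, of "v\<^sup>2"] by (simp add: mult_ac)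
    ultimately show ?thesis
      using gen_Theta_le[OF assms(1) \<open>0 < \<beta>\<close> _ _ _ that, of \<alpha> \<Phi> \<gamma> N] assms(5,6)
      unfolding P_def by linarith
  qed
  moreover have "0 < \<gamma> / m\<^sup>2 + \<bar>P\<bar>" using assms(1,2) by (simp add: add_pos_nonneg)
  ultimately show ?thesis by (metis prod_cases3)
qed

end
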